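(* Let $L$ be a rotational virtual link diagram. Then $L$ bounds a rotational virtual surface if and only if $L$ has an even number of virtual crossings.
   Context: A virtual link diagram is a diagram in the plane with classical crossings (over/under) and virtual crossings (drawn encircled). Rotational virtual equivalence is the equivalence relation on such diagrams generated by planar isotopy, the classical Reidemeister moves, and the virtual moves (virtual second and third Reidemeister moves, and the mixed move in which a strand with two virtual crossings passes over or under a classical crossing), but NOT the virtual first Reidemeister move (a virtual curl may not be added or removed); equivalently the detour move is restricted so that arcs with only virtual crossings are moved by regular homotopy in the plane (so, e.g., two opposite virtual curls can be created or cancelled via the Whitney trick, but a single one cannot). A free circle is a closed curve with no crossings (in particular no virtual crossings). Rotational virtual cobordism is the equivalence generated by rotational virtual equivalence, births (introducing an isolated free circle), deaths (removing an isolated free circle) and oriented saddle moves (bringing two oppositely oriented arcs together and resmoothing them into two new oppositely oriented arcs). $L$ bounds a rotational virtual surface if there is a sequence of such moves starting at $L$ and ending at the empty diagram. *)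

theory Defs
  imports Main
begin

text \<open>
  Combinatorial model of (oriented) virtual link diagrams in the plane, in Morse position.
  A diagram is read from bottom to top as a word of elementary horizontal slices.
  The state between two slices is the list of orientations of the strands met by a
  horizontal line (True = strand oriented upwards, False = downwards), from left to right.
  A slice (k, g) acts on the strands with k strands to its left:
    Min b : a local minimum (cup) creating two new strands oriented [b, not b];
    Max   : a local maximum (cap) joining two adjacent oppositely oriented strands;
    Cr t  : a crossing of strands k and k+1; t = Over (resp. Under) means the strand entering
            at the bottom-left passes over (resp. under); t = Virt is a virtual crossing.
\<close>

datatype ctype = Over | Under | Virt

datatype gen = Min bool | Max | Cr ctype

type_synonym slice = "nat \<times> gen"
type_synonym mword = "slice list"

fun flipc :: "ctype \<Rightarrow> ctype" where
  "flipc Over = Under"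
| "flipc Under = Over"
| "flipc Virt = Virt"

fun n_in :: "gen \<Rightarrow> nat" where
  "n_in (Min b) = 0"
| "n_in Max = 2"
| "n_in (Cr t) = 2"

fun n_out :: "gen \<Rightarrow> nat" where
  "n_out (Min b) = 2"
| "n_out Max = 0"
| "n_out (Cr t) = 2"

fun apply_slice :: "bool list \<Rightarrow> slice \<Rightarrow> bool list option" where
  "apply_slice xs (k, Min b) =
     (if k \<le> length xs then Some (take k xs @ [b, \<not> b] @ drop k xs) else None)"
| "apply_slice xs (k, Max) =
     (if k + 2 \<le> length xs \<and> xs ! (k+1) = (\<not> xs ! k)
      then Some (take k xs @ drop (k+2) xs) else None)"
| "apply_slice xs (k, Cr t) =
     (if k + 2 \<le> length xs
      then Some (take k xs @ [xs ! (k+1), xs ! k] @ drop (k+2) xs) else None)"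

fun typed :: "bool list \<Rightarrow> mword \<Rightarrow> bool list option" where
  "typed xs [] = Some xs"
| "typed xs (s # w) = (case apply_slice xs s of None \<Rightarrow> None | Some ys \<Rightarrow> typed ys w)"

definition closed_diagram :: "mword \<Rightarrow> bool" where
  "closed_diagram D \<longleftrightarrow> typed [] D = Some []"

definition num_virtual :: "mword \<Rightarrow> nat" where
  "num_virtual D = length (filter (\<lambda>s. snd s = Cr Virt) D)"

text \<open>Local relations generating rotational virtual equivalence (each applied in context,
  between words with the same source and target state).  NO virtual R1.\<close>

inductive rv_local :: "mword \<Rightarrow> mword \<Rightarrow> bool" where
  interchange_r: "b \<ge> a + n_out g1 \<Longrightarrow>
     rv_local [(a, g1), (b, g2)] [(b - n_out g1 + n_in g1, g2), (a, g1)]"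
| interchange_l: "b + n_in g2 \<le> a \<Longrightarrow>
     rv_local [(a, g1), (b, g2)] [(b, g2), (a - n_in g2 + n_out g2, g1)]"
| zigzag1: "rv_local [(i, Min b), (Suc i, Max)] []"
| zigzag2: "rv_local [(Suc i, Min b), (i, Max)] []"
| rotate1: "rv_local [(i+2, Min b), (i+1, Cr t), (i, Max)] [(i, Cr (flipc t))]"
| rotate2: "rv_local [(i, Min b), (i+1, Cr t), (i+2, Max)] [(i, Cr (flipc t))]"
| slide_max1: "rv_local [(i+1, Cr t), (i, Cr t), (i+1, Max)] [(i, Max)]"
| slide_max2: "rv_local [(i, Cr t), (i+1, Cr t), (i, Max)] [(i+1, Max)]"
| slide_min1: "rv_local [(i+1, Min b), (i, Cr t), (i+1, Cr t)] [(i, Min b)]"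
| slide_min2: "rv_local [(i, Min b), (i+1, Cr t), (i, Cr t)] [(i+1, Min b)]"
| R1a: "t \<noteq> Virt \<Longrightarrow> rv_local [(i+1, Min b), (i, Cr t), (i+1, Max)] []"
| R1b: "t \<noteq> Virt \<Longrightarrow> rv_local [(i, Min b), (i+1, Cr t), (i, Max)] []"
| R2a: "rv_local [(i, Cr Over), (i, Cr Under)] []"
| R2b: "rv_local [(i, Cr Under), (i, Cr Over)] []"
| R3: "rv_local [(i, Cr t), (i+1, Cr t), (i, Cr t)] [(i+1, Cr t), (i, Cr t), (i+1, Cr t)]"
| VR2: "rv_local [(i, Cr Virt), (i, Cr Virt)] []"
| mixed1: "rv_local [(i, Cr Virt), (i+1, Cr Virt), (i, Cr t)]
                    [(i+1, Cr t), (i, Cr Virt), (i+1, Cr Virt)]"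
| mixed2: "rv_local [(i+1, Cr Virt), (i, Cr Virt), (i+1, Cr t)]
                    [(i, Cr t), (i+1, Cr Virt), (i, Cr Virt)]"

text \<open>Additional local relations for rotational virtual cobordism:
  birth/death of a free circle, and the oriented saddle on two adjacent oppositely
  oriented strands.\<close>

inductive cob_local :: "mword \<Rightarrow> mword \<Rightarrow> bool" where
  rv: "rv_local l r \<Longrightarrow> cob_local l r"
| birth: "cob_local [] [(i, Min b), (i, Max)]"
| saddle: "cob_local [] [(i, Max), (i, Min b)]"

definition in_context :: "(mword \<Rightarrow> mword \<Rightarrow> bool) \<Rightarrow> mword \<Rightarrow> mword \<Rightarrow> bool" where
  "in_context R D D' \<longleftrightarrow>
     (\<exists>u l r v xs ys. D = u @ l @ v \<and> D' = u @ r @ v \<and>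
        typed [] u = Some xs \<and> typed xs l = Some ys \<and> typed xs r = Some ys \<and>
        (R l r \<or> R r l))"

definition rv_equivalent :: "mword \<Rightarrow> mword \<Rightarrow> bool" where
  "rv_equivalent = (in_context rv_local)\<^sup>*\<^sup>*"

definition rv_cobordant :: "mword \<Rightarrow> mword \<Rightarrow> bool" where
  "rv_cobordant = (in_context cob_local)\<^sup>*\<^sup>*"

definition bounds_rv_surface :: "mword \<Rightarrow> bool" where
  "bounds_rv_surface D \<longleftrightarrow> rv_cobordant D []"

end

theory Submission
  imports Defs
begin

text \<open>
  Every move changes the number of virtual crossings by an even number, so only diagrams
  with an even number of them can bound.  Conversely, every crossing can be removed by
  cobordism.  A crossing between oppositely oriented strands splits off, by two saddles, as
  a small curl; a crossing between equally oriented strands is first rotated into one between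
  opposite strands.  A classical curl dies by Reidemeister I.  A virtual curl cannot be
  removed, since there is no virtual first Reidemeister move, but it can be slid to the far
  left, where it commutes with every slice.  Hence every closed diagram is cobordant to a row
  of virtual curls followed by a crossing-free diagram.  The latter is a union of circles and
  dies, and the curls cancel in pairs.
\<close>

section \<open>Cobordism of words read from an arbitrary strand state\<close>

lemma typed_append:
  "typed xs (u @ v) = (case typed xs u of None \<Rightarrow> None | Some ys \<Rightarrow> typed ys v)"
  by (induction u arbitrary: xs) (auto split: option.splits)

definition cob_step :: "bool list \<Rightarrow> mword \<Rightarrow> mword \<Rightarrow> bool" where
  "cob_step xs D D' \<longleftrightarrow> (\<exists>u l r v ys zs. D = u @ l @ v \<and> D' = u @ r @ v \<and>
     typed xs u = Some ys \<and> typed ys l = Some zs \<and> typed ys r = Some zs \<and>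
     (cob_local l r \<or> cob_local r l))"

lemma cob_stepI:
  "typed xs u = Some ys \<Longrightarrow> typed ys l = Some zs \<Longrightarrow> typed ys r = Some zs \<Longrightarrow>
   cob_local l r \<or> cob_local r l \<Longrightarrow> cob_step xs (u @ l @ v) (u @ r @ v)"
  unfolding cob_step_def by blast

abbreviation cob_eq :: "bool list \<Rightarrow> mword \<Rightarrow> mword \<Rightarrow> bool" where
  "cob_eq xs \<equiv> (cob_step xs)\<^sup>*\<^sup>*"

lemma rv_cobordant_eq_cob_eq: "rv_cobordant = cob_eq []"
proof -
  have "in_context cob_local = cob_step []"
    by (auto simp: fun_eq_iff in_context_def cob_step_def)
  then show ?thesis
    by (simp add: rv_cobordant_def)
qed

lemma cob_eq_sym: "cob_eq xs D D' \<Longrightarrow> cob_eq xs D' D"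
proof -
  have "symp (cob_step xs)"
    by (rule sympI) (unfold cob_step_def, blast)
  then show "cob_eq xs D D' \<Longrightarrow> cob_eq xs D' D"
    by (blast dest: sympD[OF symp_rtranclp])
qed

lemma cob_eq_typed: "cob_eq xs D D' \<Longrightarrow> typed xs D = typed xs D'"
  by (induction rule: rtranclp_induct)
     (auto simp: cob_step_def typed_append split: option.splits)

lemma cob_eq_context:
  assumes "cob_eq xs w w'" and "typed x0 p = Some xs"
  shows "cob_eq x0 (p @ w @ q) (p @ w' @ q)"
  using assms(1)
proof (induction rule: rtranclp_induct)
  case (step w' w'')
  then obtain u l r v ys zs where w: "w' = u @ l @ v" "w'' = u @ r @ v"
    and "typed xs u = Some ys" "typed ys l = Some zs" "typed ys r = Some zs"
    and "cob_local l r \<or> cob_local r l"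
    by (auto simp: cob_step_def)
  then have "cob_step x0 ((p @ u) @ l @ (v @ q)) ((p @ u) @ r @ (v @ q))"
    using assms(2) by (intro cob_stepI) (auto simp: typed_append)
  with w have "cob_step x0 (p @ w' @ q) (p @ w'' @ q)"
    by simp
  with step.IH show ?case
    by (rule rtranclp.rtrancl_into_rtrancl)
qed simp

lemma cob_eq_move:
  assumes "typed x0 p = Some xs" and "typed xs l = typed xs r" and "typed xs l \<noteq> None"
    and "cob_local l r \<or> cob_local r l"
  shows "cob_eq x0 (p @ l @ q) (p @ r @ q)"
proof -
  from assms(2,3) obtain zs where "typed xs l = Some zs" "typed xs r = Some zs"
    by auto
  then have "cob_step xs ([] @ l @ []) ([] @ r @ [])"
    using assms(4) by (intro cob_stepI) auto
  then show ?thesis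
    using cob_eq_context[OF _ assms(1)] by (simp add: r_into_rtranclp)
qed

definition shift :: "nat \<Rightarrow> mword \<Rightarrow> mword" where
  "shift n w = map (\<lambda>(k, g). (k + n, g)) w"

lemma shift_simps [simp]:
  "shift n [] = []"
  "shift n ((k, g) # w) = (k + n, g) # shift n w"
  "shift n (u @ v) = shift n u @ shift n v"
  by (auto simp: shift_def)

lemma apply_slice_shift:
  "apply_slice xs (k, g) = Some ys \<Longrightarrow>
   apply_slice (L @ xs @ R) (k + length L, g) = Some (L @ ys @ R)"
  by (cases g) (auto simp: nth_append split: if_splits)

lemma typed_shift:
  "typed xs w = Some ys \<Longrightarrow> typed (L @ xs @ R) (shift (length L) w) = Some (L @ ys @ R)"
proof (induction w arbitrary: xs)
  case (Cons s w)
  obtain k g where s: "s = (k, g)"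
    by fastforce
  from Cons.prems obtain zs where "apply_slice xs (k, g) = Some zs" and "typed zs w = Some ys"
    by (auto simp: s split: option.splits)
  then show ?case
    using apply_slice_shift Cons.IH by (simp add: s)
qed simp

lemma rv_local_shift: "rv_local l r \<Longrightarrow> rv_local (shift n l) (shift n r)"
proof (induction rule: rv_local.induct)
  case (interchange_r b a g1 g2)
  then have "rv_local [(a + n, g1), (b + n, g2)] [(b + n - n_out g1 + n_in g1, g2), (a + n, g1)]"
    by (intro rv_local.interchange_r) simp
  with interchange_r show ?case
    by (simp add: ac_simps)
next
  case (interchange_l b g2 a g1)
  then have "rv_local [(a + n, g1), (b + n, g2)] [(b + n, g2), (a + n - n_in g2 + n_out g2, g1)]"
    by (intro rv_local.interchange_l) simp
  with interchange_l show ?case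
    by (simp add: ac_simps)
qed (auto intro: rv_local.intros[simplified])

lemma cob_local_shift: "cob_local l r \<Longrightarrow> cob_local (shift n l) (shift n r)"
  by (induction rule: cob_local.induct) (auto intro: cob_local.intros rv_local_shift)

lemma cob_eq_shift:
  assumes "cob_eq xs w w'"
  shows "cob_eq (L @ xs @ R) (shift (length L) w) (shift (length L) w')"
  using assms
proof (induction rule: rtranclp_induct)
  case (step w' w'')
  then obtain u l r v ys zs where w: "w' = u @ l @ v" "w'' = u @ r @ v"
    and "typed xs u = Some ys" "typed ys l = Some zs" "typed ys r = Some zs"
    and "cob_local l r \<or> cob_local r l"
    by (auto simp: cob_step_def)
  then have "cob_step (L @ xs @ R) (shift (length L) w') (shift (length L) w'')"
    unfolding w shift_simps by (intro cob_stepI) (auto simp: typed_shift cob_local_shift)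
  with step.IH show ?case
    by (rule rtranclp.rtrancl_into_rtrancl)
qed simp

section \<open>Parity of virtual crossings\<close>

lemma num_virtual_simps [simp]:
  "num_virtual [] = 0"
  "num_virtual ((k, g) # w) = (if g = Cr Virt then Suc (num_virtual w) else num_virtual w)"
  "num_virtual (u @ v) = num_virtual u + num_virtual v"
  by (auto simp: num_virtual_def)

lemma flipc_eq_Virt_iff [simp]: "flipc t = Virt \<longleftrightarrow> t = Virt"
  by (cases t) auto

lemma flipc_flipc [simp]: "flipc (flipc t) = t"
  by (cases t) auto

lemma cob_local_parity: "cob_local l r \<Longrightarrow> even (num_virtual l) \<longleftrightarrow> even (num_virtual r)"
proof (induction rule: cob_local.induct)
  case (rv l r)
  then show ?case
    by (induction rule: rv_local.induct) simp_all
qed simp_all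

lemma cob_eq_parity: "cob_eq xs D D' \<Longrightarrow> even (num_virtual D) \<longleftrightarrow> even (num_virtual D')"
  by (induction rule: rtranclp_induct) (auto simp: cob_step_def dest: cob_local_parity)

section \<open>Interchanging distant slices\<close>

fun gen_out :: "gen \<Rightarrow> bool list \<Rightarrow> bool list option" where
  "gen_out (Min b) M = Some [b, \<not> b]"
| "gen_out Max M = (if M ! 1 = (\<not> M ! 0) then Some [] else None)"
| "gen_out (Cr t) M = Some [M ! 1, M ! 0]"

lemma gen_out_length: "gen_out g M = Some N \<Longrightarrow> length N = n_out g"
  by (cases g) (auto split: if_splits)

lemma length_2_conv: "length M = 2 \<longleftrightarrow> (\<exists>x y. M = [x, y])"
  by (auto simp: numeral_2_eq_2 length_Suc_conv)

lemma apply_slice_split: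
  assumes "length A = k" and "length M = n_in g"
  shows "apply_slice (A @ M @ Z) (k, g) = map_option (\<lambda>N. A @ N @ Z) (gen_out g M)"
proof (cases g)
  case (Min b)
  with assms show ?thesis
    by simp
next
  case Max
  with assms obtain x y where "M = [x, y]"
    by (auto simp: length_2_conv)
  with Max assms show ?thesis
    by (auto simp: nth_append)
next
  case (Cr t)
  with assms obtain x y where "M = [x, y]"
    by (auto simp: length_2_conv)
  with Cr assms show ?thesis
    by (auto simp: nth_append)
qed

lemma apply_slice_length: "apply_slice xs (k, g) = Some ys \<Longrightarrow> k + n_in g \<le> length xs"
  by (cases g) (auto split: if_splits)

lemma split_at_length:
  assumes "k + n \<le> length xs"
  shows "\<exists>A M Z. xs = A @ M @ Z \<and> length A = k \<and> length M = n"
proof -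
  have "xs = take k xs @ take n (drop k xs) @ drop n (drop k xs)"
    by (simp only: append_take_drop_id)
  moreover have "length (take k xs) = k" "length (take n (drop k xs)) = n"
    using assms by auto
  ultimately show ?thesis
    by blast
qed

lemma typed_interchange_l:
  assumes "b + n_in g2 \<le> a" and "typed xs [(a, g1), (b, g2)] = Some ys"
  shows "typed xs [(b, g2), (a - n_in g2 + n_out g2, g1)] = Some ys"
proof -
  from assms(2) obtain ys1 where s1: "apply_slice xs (a, g1) = Some ys1"
    and s2: "apply_slice ys1 (b, g2) = Some ys"
    using assms(2) by (auto split: option.splits)
  from apply_slice_length[OF s1] obtain P M1 Z where xs: "xs = P @ M1 @ Z" "length P = a" "length M1 = n_in g1"
    using split_at_length by blast
  from assms(1) xs(2) obtain A M2 G where P: "P = A @ M2 @ G" "length A = b" "length M2 = n_in g2"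
    using split_at_length[of b "n_in g2" P] by auto
  from s1 have "map_option (\<lambda>N. P @ N @ Z) (gen_out g1 M1) = Some ys1"
    using apply_slice_split[OF xs(2,3)] xs(1) by simp
  then obtain O1 where o1: "gen_out g1 M1 = Some O1" "ys1 = A @ M2 @ (G @ O1 @ Z)"
    using P by auto
  from s2 have "map_option (\<lambda>N. A @ N @ (G @ O1 @ Z)) (gen_out g2 M2) = Some ys"
    using apply_slice_split[OF P(2,3)] o1 by simp
  then obtain O2 where o2: "gen_out g2 M2 = Some O2" "ys = A @ O2 @ G @ O1 @ Z"
    by auto
  have "apply_slice xs (b, g2) = Some ((A @ O2 @ G) @ M1 @ Z)"
    using apply_slice_split[OF P(2,3), of "G @ M1 @ Z"] xs P o2 by simp
  moreover have len: "length (A @ O2 @ G) = a - n_in g2 + n_out g2"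
    using gen_out_length[OF o2(1)] P xs by simp
  have "apply_slice ((A @ O2 @ G) @ M1 @ Z) (a - n_in g2 + n_out g2, g1) = Some ys"
    using apply_slice_split[OF len xs(3), of Z] o1 o2 by simp
  ultimately show ?thesis
    by simp
qed

lemma typed_interchange_r:
  assumes "a + n_out g1 \<le> b" and "typed xs [(a, g1), (b, g2)] = Some ys"
  shows "typed xs [(b - n_out g1 + n_in g1, g2), (a, g1)] = Some ys"
proof -
  from assms(2) obtain ys1 where s1: "apply_slice xs (a, g1) = Some ys1"
    and s2: "apply_slice ys1 (b, g2) = Some ys"
    using assms(2) by (auto split: option.splits)
  from apply_slice_length[OF s1] obtain A M1 Z where xs: "xs = A @ M1 @ Z" "length A = a" "length M1 = n_in g1"
    using split_at_length by blast
  from s1 have "map_option (\<lambda>N. A @ N @ Z) (gen_out g1 M1) = Some ys1"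
    using apply_slice_split[OF xs(2,3)] xs(1) by simp
  then obtain O1 where o1: "gen_out g1 M1 = Some O1" "ys1 = A @ O1 @ Z"
    by auto
  have lo1: "length O1 = n_out g1"
    using gen_out_length[OF o1(1)] .
  from apply_slice_length[OF s2] o1 lo1 xs assms(1) have "(b - a - n_out g1) + n_in g2 \<le> length Z"
    by simp
  then obtain G M2 Z2 where Z: "Z = G @ M2 @ Z2" "length G = b - a - n_out g1" "length M2 = n_in g2"
    using split_at_length by blast
  have len: "length (A @ O1 @ G) = b"
    using lo1 Z xs assms(1) by simp
  from s2 have "map_option (\<lambda>N. (A @ O1 @ G) @ N @ Z2) (gen_out g2 M2) = Some ys"
    using apply_slice_split[OF len Z(3)] o1 Z by simp
  then obtain O2 where o2: "gen_out g2 M2 = Some O2" "ys = A @ O1 @ G @ O2 @ Z2"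
    by auto
  have len': "length (A @ M1 @ G) = b - n_out g1 + n_in g1"
    using lo1 Z xs assms(1) by simp
  have "apply_slice xs (b - n_out g1 + n_in g1, g2) = Some (A @ M1 @ G @ O2 @ Z2)"
    using apply_slice_split[OF len' Z(3), of Z2] xs Z o2 by simp
  moreover have "apply_slice (A @ M1 @ (G @ O2 @ Z2)) (a, g1) = Some ys"
    using apply_slice_split[OF xs(2,3)] o1 o2 by simp
  ultimately show ?thesis
    by simp
qed

section \<open>Crossing-free diagrams bound\<close>

definition crossing_free :: "mword \<Rightarrow> bool" where
  "crossing_free w \<longleftrightarrow> (\<forall>s \<in> set w. \<forall>t. snd s \<noteq> Cr t)"

lemma crossing_free_simps [simp]:
  "crossing_free []"
  "crossing_free (s # w) \<longleftrightarrow> (\<forall>t. snd s \<noteq> Cr t) \<and> crossing_free w"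
  "crossing_free (u @ v) \<longleftrightarrow> crossing_free u \<and> crossing_free v"
  by (auto simp: crossing_free_def)

lemma min_max_cancel:
  assumes "typed xs [(a, Min b), (c, Max)] = Some ys" and "a \<le> Suc c" and "c \<le> Suc a"
  shows "ys = xs" and "cob_eq xs [(a, Min b), (c, Max)] []"
proof -
  from assms(1) have "a \<le> length xs"
    by (auto split: option.splits if_splits)
  then obtain A Z where xs: "xs = A @ Z" "length A = a"
    using split_at_length[of a 0 xs] by auto
  consider (birth) "c = a" | (zigzag1) "c = Suc a" | (zigzag2) "a = Suc c"
    using assms(2,3) by linarith
  note cases = this
  from cases have "cob_local [(a, Min b), (c, Max)] [] \<or> cob_local [] [(a, Min b), (c, Max)]"
    by cases (auto intro: cob_local.intros rv_local.intros)
  moreover from cases show "ys = xs"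
    using assms xs
    by cases (cases A rule: rev_cases; cases Z; auto simp: nth_append split: option.splits if_splits)+
  ultimately show "cob_eq xs [(a, Min b), (c, Max)] []"
    using cob_eq_move[of xs "[]" xs "[(a, Min b), (c, Max)]" "[]" "[]"] assms(1) by simp
qed

lemma min_max_interchange:
  assumes mm: "typed xs [(a, Min b), (c, Max)] = Some ys" and "\<not> (a \<le> Suc c \<and> c \<le> Suc a)"
  shows "\<exists>a' c'. cob_eq xs [(a, Min b), (c, Max)] [(c', Max), (a', Min b)]"
proof (cases "a + 2 \<le> c")
  case True
  then have "typed xs [(c - 2, Max), (a, Min b)] = Some ys"
    using typed_interchange_r[OF _ mm] by simp
  moreover have "rv_local [(a, Min b), (c, Max)] [(c - 2, Max), (a, Min b)]"
    using rv_local.interchange_r[of a "Min b" c Max] True by simp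
  ultimately have "cob_eq xs ([] @ [(a, Min b), (c, Max)] @ []) ([] @ [(c - 2, Max), (a, Min b)] @ [])"
    using mm by (intro cob_eq_move[of xs "[]" xs]) (auto intro: cob_local.rv)
  then show ?thesis
    by auto
next
  case False
  with assms(2) have "c + 2 \<le> a"
    by linarith
  then have "typed xs [(c, Max), (a - 2, Min b)] = Some ys"
    using typed_interchange_l[OF _ mm] by simp
  moreover have "rv_local [(a, Min b), (c, Max)] [(c, Max), (a - 2, Min b)]"
    using rv_local.interchange_l[of c Max a "Min b"] \<open>c + 2 \<le> a\<close> by simp
  ultimately have "cob_eq xs ([] @ [(a, Min b), (c, Max)] @ []) ([] @ [(c, Max), (a - 2, Min b)] @ [])"
    using mm by (intro cob_eq_move[of xs "[]" xs]) (auto intro: cob_local.rv)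
  then show ?thesis
    by auto
qed

text \<open>The first Max after the last Min either cancels against it (birth or zigzag) or is
  interchanged past it.\<close>

lemma min_before_maxes:
  assumes "crossing_free p" and "\<forall>s \<in> set q. snd s = Max"
    and "typed [] (p @ (a, Min b) # q) = Some []"
  shows "\<exists>D. crossing_free D \<and> length D < length (p @ (a, Min b) # q) \<and>
           cob_eq [] (p @ (a, Min b) # q) D"
  using assms
proof (induction q arbitrary: p a)
  case Nil
  then show ?case
    by (auto simp: typed_append split: option.splits if_splits)
next
  case (Cons s q)
  then obtain c where s: "s = (c, Max)"
    by (cases s) auto
  from Cons.prems obtain xs ys where p: "typed [] p = Some xs"
    and mm: "typed xs [(a, Min b), (c, Max)] = Some ys" and q: "typed ys q = Some []"
    by (auto simp: s typed_append split: option.splits)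
  have word: "p @ (a, Min b) # s # q = p @ [(a, Min b), (c, Max)] @ q"
    by (simp add: s)
  show ?case
  proof (cases "a \<le> Suc c \<and> c \<le> Suc a")
    case True
    then have "cob_eq [] (p @ (a, Min b) # s # q) (p @ [] @ q)"
      unfolding word using cob_eq_context[OF min_max_cancel(2)[OF mm] p] by blast
    with Cons.prems show ?thesis
      by (intro exI[of _ "p @ q"]) (auto simp: crossing_free_def)
  next
    case False
    then obtain a' c' where swap: "cob_eq xs [(a, Min b), (c, Max)] [(c', Max), (a', Min b)]"
      using min_max_interchange[OF mm] by blast
    have step: "cob_eq [] (p @ (a, Min b) # s # q) ((p @ [(c', Max)]) @ (a', Min b) # q)"
      unfolding word using cob_eq_context[OF swap p, of q] by simp
    have "typed [] ((p @ [(c', Max)]) @ (a', Min b) # q) = Some []"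
      using cob_eq_typed[OF step] Cons.prems(3) by simp
    with Cons.IH[of "p @ [(c', Max)]" a'] Cons.prems step show ?thesis
      by (auto intro: rtranclp_trans)
  qed
qed

lemma crossing_free_null:
  assumes "crossing_free D" and "typed [] D = Some []"
  shows "cob_eq [] D []"
  using assms
proof (induction "length D" arbitrary: D rule: less_induct)
  case less
  show ?case
  proof (cases D)
    case (Cons s w)
    with less.prems(2) have "\<exists>b. snd s = Min b"
      by (cases s; cases "snd s") (auto split: option.splits if_splits)
    with Cons obtain p a b q where D: "D = p @ (a, Min b) # q"
      and q: "\<forall>s \<in> set q. \<nexists>b. snd s = Min b"
      using split_list_last_prop[of D "\<lambda>s. \<exists>b. snd s = Min b"] by fastforce
    with less.prems(1) have "\<forall>s \<in> set q. snd s = Max"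
      by (metis crossing_free_simps(2,3) gen.exhaust in_set_conv_decomp)
    with less.prems D obtain D' where "crossing_free D'" "length D' < length D" "cob_eq [] D D'"
      using min_before_maxes by force
    with less.hyps less.prems(2) show ?thesis
      by (metis cob_eq_typed rtranclp_trans)
  qed simp
qed

section \<open>Curls\<close>

definition curl :: "ctype \<Rightarrow> nat \<Rightarrow> bool \<Rightarrow> mword" where
  "curl t k b = [(k, Min b), (k, Cr t), (k, Max)]"

lemma typed_curl: "k \<le> length xs \<Longrightarrow> typed xs (curl t k b) = Some xs"
proof -
  assume "k \<le> length xs"
  then obtain A Z where "xs = A @ Z" "length A = k"
    using split_at_length[of k 0 xs] by auto
  then show ?thesis
    by (simp add: curl_def nth_append)
qed

lemma shift_curl [simp]: "shift n (curl t k b) = curl t (k + n) b"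
  by (simp add: curl_def)

lemma crossing_opposite_split:
  "cob_eq [a, \<not> a] [(0, Cr t)] ([(0, Max)] @ curl t 0 a @ [(0, Min (\<not> a))])"
proof -
  have "cob_eq [a, \<not> a] ([] @ [] @ [(0, Cr t)]) ([] @ [(0, Max), (0, Min a)] @ [(0, Cr t)])"
    by (rule cob_eq_move) (auto intro: cob_local.saddle)
  moreover have "cob_eq [a, \<not> a] ([(0, Max), (0, Min a), (0, Cr t)] @ [] @ [])
      ([(0, Max), (0, Min a), (0, Cr t)] @ [(0, Max), (0, Min (\<not> a))] @ [])"
    by (rule cob_eq_move) (auto intro: cob_local.saddle)
  ultimately show ?thesis
    by (simp add: curl_def)
qed

lemma crossing_rotate:
  "cob_eq [x, y] [(0, Cr t)] [(2, Min (\<not> x)), (1, Cr (flipc t)), (0, Max)]"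
  using cob_eq_move[of "[x, y]" "[]" _ "[(0, Cr t)]" "[(2, Min (\<not> x)), (1, Cr (flipc t)), (0, Max)]" "[]"]
    rv_local.rotate1[of 0 "\<not> x" "flipc t"]
  by (simp add: numeral_2_eq_2 cob_local.rv)

lemma classical_curl_null:
  assumes "t \<noteq> Virt"
  shows "cob_eq [] (curl t 0 b) []"
proof -
  have "cob_eq [] ([(0, Min b)] @ [(0, Cr t)] @ [(0, Max)])
      ([(0, Min b)] @ [(2, Min (\<not> b)), (1, Cr (flipc t)), (0, Max)] @ [(0, Max)])"
    using cob_eq_context[OF crossing_rotate[of b "\<not> b" t], of "[]" "[(0, Min b)]" "[(0, Max)]"]
    by simp
  moreover have "cob_eq [] ([(0, Min b), (2, Min (\<not> b)), (1, Cr (flipc t))] @ [(0, Max), (0, Max)] @ [])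
      ([(0, Min b), (2, Min (\<not> b)), (1, Cr (flipc t))] @ [(2, Max), (0, Max)] @ [])"
    using rv_local.interchange_r[of 0 Max 0 Max]
    by (intro cob_eq_move) (auto simp: numeral_2_eq_2 intro: cob_local.rv)
  moreover have "cob_eq [] ([(0, Min b)] @ [(2, Min (\<not> b)), (1, Cr (flipc t)), (2, Max)] @ [(0, Max)])
      ([(0, Min b)] @ [] @ [(0, Max)])"
    using rv_local.R1a[of "flipc t" 1 "\<not> b"] assms
    by (intro cob_eq_move) (auto simp: numeral_2_eq_2 intro: cob_local.rv)
  moreover have "cob_eq [] ([] @ [(0, Min b), (0, Max)] @ []) ([] @ [] @ [])"
    by (intro cob_eq_move) (auto intro: cob_local.birth)
  ultimately show ?thesis
    by (auto simp: curl_def elim!: rtranclp_trans)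
qed

lemma virtual_curl_step_left: "cob_eq [s] (curl Virt 1 b) (curl Virt 0 b)"
proof -
  have "cob_eq [s] ([] @ [(1, Min b)] @ [(1, Cr Virt), (1, Max)])
      ([] @ [(0, Min b), (1, Cr Virt), (0, Cr Virt)] @ [(1, Cr Virt), (1, Max)])"
    using rv_local.slide_min2[of 0 b Virt]
    by (intro cob_eq_move) (auto simp: numeral_2_eq_2 intro: cob_local.rv)
  moreover have "cob_eq [s] ([(0, Min b), (1, Cr Virt), (0, Cr Virt), (1, Cr Virt)] @ [(1, Max)] @ [])
      ([(0, Min b), (1, Cr Virt), (0, Cr Virt), (1, Cr Virt)] @ [(0, Cr Virt), (1, Cr Virt), (0, Max)] @ [])"
    using rv_local.slide_max2[of 0 Virt]
    by (intro cob_eq_move) (auto simp: numeral_2_eq_2 intro: cob_local.rv)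
  moreover have "cob_eq [s]
      ([(0, Min b), (1, Cr Virt)] @ [(0, Cr Virt), (1, Cr Virt), (0, Cr Virt)] @ [(1, Cr Virt), (0, Max)])
      ([(0, Min b), (1, Cr Virt)] @ [(1, Cr Virt), (0, Cr Virt), (1, Cr Virt)] @ [(1, Cr Virt), (0, Max)])"
    using rv_local.R3[of 0 Virt]
    by (intro cob_eq_move) (auto simp: numeral_2_eq_2 intro: cob_local.rv)
  moreover have "cob_eq [s]
      ([(0, Min b)] @ [(1, Cr Virt), (1, Cr Virt)] @ [(0, Cr Virt), (1, Cr Virt), (1, Cr Virt), (0, Max)])
      ([(0, Min b)] @ [] @ [(0, Cr Virt), (1, Cr Virt), (1, Cr Virt), (0, Max)])"
    using rv_local.VR2[of 1]
    by (intro cob_eq_move) (auto simp: numeral_2_eq_2 intro: cob_local.rv)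
  moreover have "cob_eq [s] ([(0, Min b), (0, Cr Virt)] @ [(1, Cr Virt), (1, Cr Virt)] @ [(0, Max)])
      ([(0, Min b), (0, Cr Virt)] @ [] @ [(0, Max)])"
    using rv_local.VR2[of 1]
    by (intro cob_eq_move) (auto simp: numeral_2_eq_2 intro: cob_local.rv)
  ultimately show ?thesis
    by (auto simp: curl_def elim!: rtranclp_trans)
qed

lemma virtual_curl_move_left:
  assumes "k \<le> length ys"
  shows "cob_eq ys (curl Virt k b) (curl Virt 0 b)"
  using assms
proof (induction k)
  case (Suc k)
  then obtain L s R where ys: "ys = L @ [s] @ R" "length L = k"
    using split_at_length[of k 1 ys] by (auto simp: length_Suc_conv)
  have "cob_eq ys (curl Virt (Suc k) b) (curl Virt k b)"
    using cob_eq_shift[OF virtual_curl_step_left[of s b], of L R] ys by simp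
  with Suc show ?case
    by (meson Suc_leD rtranclp_trans)
qed simp

lemma curl_commute:
  assumes "typed xs [(a, g)] = Some ys"
  shows "cob_eq xs ([(a, g)] @ curl t 0 b) (curl t 0 b @ [(a, g)])"
proof -
  have slice: "apply_slice xs (a, g) = Some ys"
    using assms by (auto split: option.splits)
  have slice_shifted: "apply_slice (c # d # xs) (a + 2, g) = Some (c # d # ys)" for c d
    using apply_slice_shift[OF slice, of "[c, d]" "[]"] by simp
  have "cob_eq xs ([] @ [(a, g), (0, Min b)] @ [(0, Cr t), (0, Max)])
      ([] @ [(0, Min b), (a + 2, g)] @ [(0, Cr t), (0, Max)])"
    using rv_local.interchange_l[of 0 "Min b" a g]
      typed_interchange_l[of 0 "Min b" a xs g "b # (\<not> b) # ys"] slice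
    by (intro cob_eq_move) (auto intro: cob_local.rv)
  moreover have "cob_eq xs ([(0, Min b)] @ [(a + 2, g), (0, Cr t)] @ [(0, Max)])
      ([(0, Min b)] @ [(0, Cr t), (a + 2, g)] @ [(0, Max)])"
    using rv_local.interchange_l[of 0 "Cr t" "a + 2" g]
      typed_interchange_l[of 0 "Cr t" "a + 2" "b # (\<not> b) # xs" g "(\<not> b) # b # ys"] slice_shifted
    by (intro cob_eq_move) (auto intro: cob_local.rv)
  moreover have "cob_eq xs ([(0, Min b), (0, Cr t)] @ [(a + 2, g), (0, Max)] @ [])
      ([(0, Min b), (0, Cr t)] @ [(0, Max), (a, g)] @ [])"
    using rv_local.interchange_l[of 0 Max "a + 2" g]
      typed_interchange_l[of 0 Max "a + 2" "(\<not> b) # b # xs" g ys] slice_shifted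
    by (intro cob_eq_move) (auto intro: cob_local.rv)
  ultimately show ?thesis
    by (auto simp: curl_def elim!: rtranclp_trans)
qed

lemma curl_commute_prefix:
  "typed x0 p = Some xs \<Longrightarrow> cob_eq x0 (p @ curl t 0 b @ q) (curl t 0 b @ p @ q)"
proof (induction p arbitrary: q xs rule: rev_induct)
  case (snoc s p)
  obtain a g where s: "s = (a, g)"
    by fastforce
  from snoc.prems obtain zs where p: "typed x0 p = Some zs" and "typed zs [s] = Some xs"
    by (auto simp: typed_append split: option.splits)
  then have "cob_eq x0 (p @ ([(a, g)] @ curl t 0 b) @ q) (p @ (curl t 0 b @ [(a, g)]) @ q)"
    using cob_eq_context[OF curl_commute p] s by blast
  moreover have "cob_eq x0 (p @ curl t 0 b @ ([(a, g)] @ q)) (curl t 0 b @ p @ ([(a, g)] @ q))"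
    using snoc.IH[OF p] .
  ultimately show ?case
    using s by (auto elim: rtranclp_trans)
qed simp

section \<open>Normal form: virtual curls followed by a crossing-free diagram\<close>

definition vcurls :: "bool list \<Rightarrow> mword" where
  "vcurls bs = concat (map (curl Virt 0) bs)"

lemma vcurls_simps [simp]:
  "vcurls [] = []"
  "vcurls (b # bs) = curl Virt 0 b @ vcurls bs"
  "vcurls (bs @ cs) = vcurls bs @ vcurls cs"
  by (simp_all add: vcurls_def)

lemma typed_vcurls [simp]:
  "typed xs (vcurls bs) = Some xs"
  "typed xs (vcurls bs @ w) = typed xs w"
  by (induction bs) (simp_all add: typed_append typed_curl)

lemma num_virtual_vcurls [simp]: "num_virtual (vcurls bs) = length bs"
  by (induction bs) (simp_all add: curl_def)

lemma vcurls_commute_prefix: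
  assumes "typed x0 p = Some xs"
  shows "cob_eq x0 (p @ vcurls bs @ q) (vcurls bs @ p @ q)"
proof (induction bs)
  case (Cons b bs)
  have "cob_eq x0 (p @ curl Virt 0 b @ (vcurls bs @ q)) (curl Virt 0 b @ p @ vcurls bs @ q)"
    using curl_commute_prefix[OF assms] .
  moreover have "cob_eq x0 (curl Virt 0 b @ (p @ vcurls bs @ q) @ [])
      (curl Virt 0 b @ (vcurls bs @ p @ q) @ [])"
    using cob_eq_context[OF Cons.IH] typed_curl[of 0 x0] by blast
  ultimately show ?case
    by (auto elim: rtranclp_trans)
qed simp

lemma crossing_opposite_elim:
  assumes xs: "xs = L @ [x, \<not> x] @ R" and k: "length L = k"
  shows "\<exists>w. crossing_free w \<and> cob_eq xs [(k, Cr t)] (vcurls (if t = Virt then [x] else []) @ w)"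
proof -
  have split: "cob_eq xs [(k, Cr t)] ([(k, Max)] @ curl t k x @ [(k, Min (\<not> x))])"
    using cob_eq_shift[OF crossing_opposite_split[of x t], of L R] xs k by simp
  have max: "typed xs [(k, Max)] = Some (L @ R)"
    using xs k by (simp add: nth_append)
  have "cob_eq (L @ R) (curl t k x) (vcurls (if t = Virt then [x] else []))"
  proof (cases "t = Virt")
    case True
    then show ?thesis
      using virtual_curl_move_left[of k "L @ R" x] k by simp
  next
    case False
    then show ?thesis
      using cob_eq_shift[OF classical_curl_null[OF False, of x], of L R] k by simp
  qed
  from cob_eq_context[OF this max, of "[(k, Min (\<not> x))]"]
  have "cob_eq xs ([(k, Max)] @ curl t k x @ [(k, Min (\<not> x))])
      ([(k, Max)] @ vcurls (if t = Virt then [x] else []) @ [(k, Min (\<not> x))])" .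
  also have "cob_eq xs \<dots> (vcurls (if t = Virt then [x] else []) @ [(k, Max), (k, Min (\<not> x))])"
    using vcurls_commute_prefix[OF max] by simp
  finally show ?thesis
    using split by (intro exI[of _ "[(k, Max), (k, Min (\<not> x))]"]) (auto elim: rtranclp_trans)
qed

lemma crossing_elim:
  assumes "k + 2 \<le> length xs"
  shows "\<exists>w. crossing_free w \<and>
           cob_eq xs [(k, Cr t)] (vcurls (if t = Virt then [xs ! k] else []) @ w)"
proof -
  obtain L M R where xs: "xs = L @ M @ R" and k: "length L = k" and "length M = 2"
    using split_at_length[OF assms] by blast
  then obtain x y where M: "M = [x, y]"
    by (auto simp: length_2_conv)
  have xk: "xs ! k = x"
    using xs k M by (simp add: nth_append)
  show ?thesis
  proof (cases "y = x")
    case False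
    then show ?thesis
      using crossing_opposite_elim[of xs L x R k t] xs M k xk by (cases y) auto
  next
    case True
    define xs' where "xs' = (L @ [x]) @ [x, \<not> x] @ ([x] @ R)"
    have rotate: "cob_eq xs [(k, Cr t)] ([(k + 2, Min (\<not> x))] @ [(k + 1, Cr (flipc t))] @ [(k, Max)])"
      using cob_eq_shift[OF crossing_rotate[of x x t], of L R] xs M k True by (simp add: ac_simps)
    have min: "typed xs [(k + 2, Min (\<not> x))] = Some xs'"
      using xs M k True by (simp add: xs'_def)
    obtain w where "crossing_free w"
      and w: "cob_eq xs' [(k + 1, Cr (flipc t))] (vcurls (if t = Virt then [x] else []) @ w)"
      using crossing_opposite_elim[OF xs'_def, of "k + 1" "flipc t"] k by auto
    note rotate
    also have "cob_eq xs ([(k + 2, Min (\<not> x))] @ [(k + 1, Cr (flipc t))] @ [(k, Max)])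
        ([(k + 2, Min (\<not> x))] @ (vcurls (if t = Virt then [x] else []) @ w) @ [(k, Max)])"
      using cob_eq_context[OF w min] .
    also have "cob_eq xs \<dots>
        (vcurls (if t = Virt then [x] else []) @ [(k + 2, Min (\<not> x))] @ w @ [(k, Max)])"
      using vcurls_commute_prefix[OF min] by simp
    finally show ?thesis
      using \<open>crossing_free w\<close> xk by (intro exI[of _ "[(k + 2, Min (\<not> x))] @ w @ [(k, Max)]"]) auto
  qed
qed

lemma crossing_extract:
  assumes p: "typed x0 p = Some xs" and k: "k + 2 \<le> length xs"
  shows "\<exists>w. crossing_free w \<and> typed xs w = typed xs [(k, Cr t)] \<and>
           cob_eq x0 (p @ [(k, Cr t)] @ q) (vcurls (if t = Virt then [xs ! k] else []) @ p @ w @ q)"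
proof -
  let ?vs = "vcurls (if t = Virt then [xs ! k] else [])"
  obtain w where "crossing_free w" and w: "cob_eq xs [(k, Cr t)] (?vs @ w)"
    using crossing_elim[OF k] by blast
  have "cob_eq x0 (p @ [(k, Cr t)] @ q) (p @ ?vs @ (w @ q))"
    using cob_eq_context[OF w p] by simp
  also have "cob_eq x0 \<dots> (?vs @ p @ w @ q)"
    using vcurls_commute_prefix[OF p] .
  finally show ?thesis
    using \<open>crossing_free w\<close> cob_eq_typed[OF w] by auto
qed

definition num_crossings :: "mword \<Rightarrow> nat" where
  "num_crossings w = length (filter (\<lambda>s. \<exists>t. snd s = Cr t) w)"

lemma num_crossings_append [simp]: "num_crossings (u @ v) = num_crossings u + num_crossings v"
  by (simp add: num_crossings_def)

lemma num_crossings_crossing_free: "crossing_free w \<Longrightarrow> num_crossings w = 0"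
  by (auto simp: num_crossings_def crossing_free_def filter_empty_conv)

lemma virtual_curls_normal_form:
  assumes "typed [] D = Some []"
  shows "\<exists>bs D0. crossing_free D0 \<and> cob_eq [] D (vcurls bs @ D0)"
  using assms
proof (induction "num_crossings D" arbitrary: D rule: less_induct)
  case less
  show ?case
  proof (cases "crossing_free D")
    case True
    then show ?thesis
      by (intro exI[of _ "[]"] exI[of _ D]) simp
  next
    case False
    then obtain p k t q where D: "D = p @ [(k, Cr t)] @ q"
      by (auto simp: crossing_free_def split_list_first_prop_iff)
    with less.prems obtain xs where p: "typed [] p = Some xs" and "typed xs [(k, Cr t)] \<noteq> None"
      by (auto simp: typed_append split: option.splits)
    then have "k + 2 \<le> length xs"
      by (auto split: if_splits)
    then obtain vs w where "crossing_free w"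
      and extracted: "cob_eq [] D (vcurls vs @ p @ w @ q)"
      using crossing_extract[OF p] D by blast
    then have "typed [] (p @ w @ q) = Some []" and "num_crossings (p @ w @ q) < num_crossings D"
      using cob_eq_typed[OF extracted] less.prems D by (simp_all add: num_crossings_crossing_free)
         (simp add: num_crossings_def)
    then obtain bs D0 where "crossing_free D0" and rest: "cob_eq [] (p @ w @ q) (vcurls bs @ D0)"
      using less.hyps by blast
    have "cob_eq [] (vcurls vs @ (p @ w @ q) @ []) (vcurls vs @ (vcurls bs @ D0) @ [])"
      using cob_eq_context[OF rest, of "[]" "vcurls vs" "[]"] by simp
    with extracted \<open>crossing_free D0\<close> show ?thesis
      by (intro exI[of _ "vs @ bs"] exI[of _ D0])
         (auto elim: rtranclp_trans)
  qed
qed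

section \<open>Virtual curls cancel in pairs\<close>

text \<open>A saddle joins the two curls into one circle whose two virtual crossings cancel by VR2.\<close>

lemma opposite_vcurl_pair_null: "cob_eq [] (vcurls [\<not> b, b]) []"
proof -
  have "cob_eq [] ([(0, Min (\<not> b)), (0, Cr Virt)] @ [(0, Max), (0, Min b)] @ [(0, Cr Virt), (0, Max)])
      ([(0, Min (\<not> b)), (0, Cr Virt)] @ [] @ [(0, Cr Virt), (0, Max)])"
    by (intro cob_eq_move) (auto intro: cob_local.saddle)
  moreover have "cob_eq [] ([(0, Min (\<not> b))] @ [(0, Cr Virt), (0, Cr Virt)] @ [(0, Max)])
      ([(0, Min (\<not> b))] @ [] @ [(0, Max)])"
    by (intro cob_eq_move) (auto intro: cob_local.rv rv_local.VR2)
  moreover have "cob_eq [] ([] @ [(0, Min (\<not> b)), (0, Max)] @ []) ([] @ [] @ [])"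
    by (intro cob_eq_move) (auto intro: cob_local.birth)
  ultimately show ?thesis
    by (auto simp: curl_def elim!: rtranclp_trans)
qed

text \<open>The diagram W is null by VR2; extracting its two virtual crossings one after the other
  instead produces two curls of orientation a.\<close>

lemma equal_vcurl_pair_null: "cob_eq [] (vcurls [a, a]) []"
proof -
  define p :: mword where "p = [(0, Min (\<not> a)), (2, Min a)]"
  define W :: mword where "W = p @ [(1, Cr Virt)] @ [(1, Cr Virt), (2, Max), (0, Max)]"
  have p: "typed [] p = Some [\<not> a, a, a, \<not> a]"
    by (simp add: p_def numeral_2_eq_2)
  have "cob_eq [] (p @ [(1, Cr Virt), (1, Cr Virt)] @ [(2, Max), (0, Max)]) (p @ [] @ [(2, Max), (0, Max)])"
    using p by (intro cob_eq_move) (auto intro: cob_local.rv rv_local.VR2)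
  moreover have "cob_eq [] (p @ [(2, Max), (0, Max)]) []"
    by (rule crossing_free_null) (auto simp: p_def numeral_2_eq_2)
  ultimately have W_null: "cob_eq [] W []"
    by (auto simp: W_def elim: rtranclp_trans)
  obtain w1 where "crossing_free w1" and w1: "typed [\<not> a, a, a, \<not> a] w1 = Some [\<not> a, a, a, \<not> a]"
    and W1: "cob_eq [] W (vcurls [a] @ p @ w1 @ [(1, Cr Virt), (2, Max), (0, Max)])"
    using crossing_extract[OF p, of 1 Virt "[(1, Cr Virt), (2, Max), (0, Max)]"] unfolding W_def by auto
  have p1: "typed [] (vcurls [a] @ p @ w1) = Some [\<not> a, a, a, \<not> a]"
    using p w1 by (simp add: typed_append del: vcurls_simps)
  obtain w2 where "crossing_free w2"
    and W2: "cob_eq [] ((vcurls [a] @ p @ w1) @ [(1, Cr Virt)] @ [(2, Max), (0, Max)])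
      (vcurls [a] @ (vcurls [a] @ p @ w1) @ w2 @ [(2, Max), (0, Max)])"
    using crossing_extract[OF p1, of 1 Virt "[(2, Max), (0, Max)]"] by auto
  define rest :: mword where "rest = p @ w1 @ w2 @ [(2, Max), (0, Max)]"
  from W1 W2 have W_split: "cob_eq [] W (vcurls [a, a] @ rest)"
    by (auto simp: rest_def elim: rtranclp_trans)
  have "typed [] rest = Some []"
    using cob_eq_typed[OF W_null] cob_eq_typed[OF W_split] by (simp add: typed_append typed_curl)
  then have rest_null: "cob_eq [] rest []"
    using crossing_free_null \<open>crossing_free w1\<close> \<open>crossing_free w2\<close> by (simp add: rest_def p_def)
  have "cob_eq [] (vcurls [a, a] @ rest) (vcurls [a, a])"
    using cob_eq_context[OF rest_null typed_vcurls(1)[of "[]" "[a, a]"], of "[]"] by simp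
  with W_split W_null show ?thesis
    by (metis cob_eq_sym rtranclp_trans)
qed

lemma vcurl_pair_null: "cob_eq [] (vcurls [a, b]) []"
  using equal_vcurl_pair_null[of a] opposite_vcurl_pair_null[of b] by (cases "a = b") auto

lemma even_vcurls_cancel: "even (length bs) \<Longrightarrow> cob_eq [] (vcurls bs @ D) D"
proof (induction bs rule: induct_list012)
  case (3 a b bs)
  have "cob_eq [] ([] @ vcurls [a, b] @ (vcurls bs @ D)) ([] @ [] @ (vcurls bs @ D))"
    by (rule cob_eq_context[OF vcurl_pair_null]) simp
  with 3 show ?case
    by (auto elim: rtranclp_trans)
qed simp_all

theorem mainTheorem2:
  assumes "closed_diagram L"
  shows "bounds_rv_surface L \<longleftrightarrow> even (num_virtual L)"
proof
  assume "bounds_rv_surface L"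
  then have "cob_eq [] L []"
    by (simp add: bounds_rv_surface_def rv_cobordant_eq_cob_eq)
  then show "even (num_virtual L)"
    using cob_eq_parity by fastforce
next
  assume even: "even (num_virtual L)"
  have L: "typed [] L = Some []"
    using assms by (simp add: closed_diagram_def)
  then obtain bs D where D: "crossing_free D" and normal: "cob_eq [] L (vcurls bs @ D)"
    using virtual_curls_normal_form by blast
  have "num_virtual D = 0"
    using D by (auto simp: num_virtual_def crossing_free_def filter_empty_conv)
  with even cob_eq_parity[OF normal] have "cob_eq [] (vcurls bs @ D) D"
    by (intro even_vcurls_cancel) simp
  moreover have "cob_eq [] D []"
    using crossing_free_null D cob_eq_typed[OF normal] L by simp
  ultimately show "bounds_rv_surface L"
    using normal by (auto simp: bounds_rv_surface_def rv_cobordant_eq_cob_eq elim: rtranclp_trans)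
qed

end
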